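(* Let $a>1$ and $c,d>0$ be fixed. There exist positive constants $M_x$ and $M_y$ (independent of $m,n$ and of $(x,y)$) such that for all $(x,y)\in[0,c]\times[0,d]$ and all $m,n\in\mathbb{N}$, \[ \hat{Y}_{m,n,a}\big((t-x)^4;x,y\big)\leq \frac{M_x}{m^2},\qquad \hat{Y}_{m,n,a}\big((s-y)^4;x,y\big)\leq \frac{M_y}{n^2}. \]
   Context: For $m,n\in\mathbb{N}$, $(x,y)\in[0,\infty)^2$ and integers $k_1,k_2\ge0$ let \[ s_{m,n,k_1,k_2}^a(x,y)=a^{-\frac{x}{a^{1/m}-1}}\,a^{-\frac{y}{a^{1/n}-1}}\,\frac{x^{k_1}y^{k_2}(\log a)^{k_1+k_2}}{(a^{1/m}-1)^{k_1}(a^{1/n}-1)^{k_2}\,k_1!\,k_2!}, \] and \[ \hat{Y}_{m,n,a}(f;x,y)=\sum_{k_1=0}^{\infty}\sum_{k_2=0}^{\infty}s_{m,n,k_1,k_2}^a(x,y)\,f\!\left(\tfrac{k_1}{m},\tfrac{k_2}{n}\right). \] $\hat{Y}_{m,n,a}(g(t,s);x,y)$ denotes the operator applied to $(t,s)\mapsto g(t,s)$ (with $t=k_1/m$, $s=k_2/n$). *)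

theory Defs
  imports "HOL-Analysis.Analysis"
begin

definition s_basis :: "real \<Rightarrow> nat \<Rightarrow> nat \<Rightarrow> nat \<Rightarrow> nat \<Rightarrow> real \<Rightarrow> real \<Rightarrow> real" where
  "s_basis a m n k1 k2 x y =
     a powr (- x / (a powr (1 / real m) - 1)) * a powr (- y / (a powr (1 / real n) - 1)) *
     (x ^ k1 * y ^ k2 * (ln a) ^ (k1 + k2)) /
     ((a powr (1 / real m) - 1) ^ k1 * (a powr (1 / real n) - 1) ^ k2 * fact k1 * fact k2)"

definition Yhat :: "nat \<Rightarrow> nat \<Rightarrow> real \<Rightarrow> (real \<Rightarrow> real \<Rightarrow> real) \<Rightarrow> real \<Rightarrow> real \<Rightarrow> real" where
  "Yhat m n a f x y =
     (\<Sum>k1. \<Sum>k2. s_basis a m n k1 k2 x y * f (real k1 / real m) (real k2 / real n))"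

end

theory Submission
  imports Defs
begin

(* The basis functions factor into Poisson weights exp(-l) l^k / k! with rates
   l = x ln a / (a^(1/m) - 1) and y ln a / (a^(1/n) - 1), so each bound is the fourth moment
   of K/m about x for a Poisson variable K of rate l.  Writing x = l/m + e, this moment is
   m^-4 (l + 3 l^2) - 4 m^-3 e l + 6 m^-2 e^2 l + e^4, and with h = ln a / m the inequalities
   h <= exp h - 1 and exp h - 1 - h <= h (exp h - 1) give 0 <= l/m <= x and
   0 <= e <= x ln a / m.  Hence every term is at most a constant times 1/m^2,
   uniformly for x in [0, c]. *)

definition falling_fact :: "nat \<Rightarrow> nat \<Rightarrow> real" where
  "falling_fact k j = (\<Prod>i<j. real k - real i)"

lemma falling_fact_Suc_Suc: "falling_fact (Suc k) (Suc j) = real (Suc k) * falling_fact k j"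
  unfolding falling_fact_def prod.lessThan_Suc_shift by simp

lemma falling_fact_0_Suc: "falling_fact 0 (Suc j) = 0"
  unfolding falling_fact_def prod.lessThan_Suc_shift by simp

lemma falling_fact_small:
  "falling_fact k 0 = 1" "falling_fact k 1 = real k" "falling_fact k 2 = real k * (real k - 1)"
  "falling_fact k 3 = real k * (real k - 1) * (real k - 2)"
  "falling_fact k 4 = real k * (real k - 1) * (real k - 2) * (real k - 3)"
  by (simp_all add: falling_fact_def numeral_eq_Suc prod.lessThan_Suc)

lemma sums_falling_fact_exp: "(\<lambda>k. l ^ k / fact k * falling_fact k j) sums (l ^ j * exp l)"
proof (induction j)
  case 0
  show ?case using exp_converges[of l] by (simp add: falling_fact_def divide_inverse mult.commute)
next
  case (Suc j)
  have "(\<lambda>k. l * (l ^ k / fact k * falling_fact k j)) sums (l * (l ^ j * exp l))"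
    using sums_mult[OF Suc.IH] .
  moreover have "l * (l ^ k / fact k * falling_fact k j)
      = l ^ Suc k / fact (Suc k) * falling_fact (Suc k) (Suc j)" for k
    by (simp add: falling_fact_Suc_Suc field_simps del: of_nat_Suc)
  ultimately have "(\<lambda>k. l ^ Suc k / fact (Suc k) * falling_fact (Suc k) (Suc j))
      sums (l ^ Suc j * exp l)"
    by (simp add: mult.assoc)
  then show ?case
    using sums_Suc_iff[of "\<lambda>k. l ^ k / fact k * falling_fact k (Suc j)"]
    by (simp add: falling_fact_0_Suc)
qed

definition poisson_weight :: "real \<Rightarrow> nat \<Rightarrow> real" where
  "poisson_weight l k = exp (- l) * l ^ k / fact k"

lemma poisson_factorial_moment: "(\<lambda>k. poisson_weight l k * falling_fact k j) sums l ^ j"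
  using sums_mult[OF sums_falling_fact_exp[of l j], of "exp (- l)"]
  by (simp add: poisson_weight_def exp_minus field_simps)

lemma poisson_weight_sums_1: "poisson_weight l sums 1"
  using poisson_factorial_moment[of l 0] by (simp add: falling_fact_small)

lemma poisson_power_moments:
  "(\<lambda>k. poisson_weight l k * real k) sums l"
  "(\<lambda>k. poisson_weight l k * real k ^ 2) sums (l ^ 2 + l)"
  "(\<lambda>k. poisson_weight l k * real k ^ 3) sums (l ^ 3 + 3 * l ^ 2 + l)"
  "(\<lambda>k. poisson_weight l k * real k ^ 4) sums (l ^ 4 + 6 * l ^ 3 + 7 * l ^ 2 + l)"
proof -
  (* The coefficients are Stirling numbers of the second kind: k^4 = (k)_4 + 6 (k)_3 + 7 (k)_2 + (k)_1. *)
  note F = poisson_factorial_moment[of l]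
  show "(\<lambda>k. poisson_weight l k * real k) sums l"
    using F[of 1] unfolding falling_fact_small by simp
  show "(\<lambda>k. poisson_weight l k * real k ^ 2) sums (l ^ 2 + l)"
    using sums_add[OF F[of 2] F[of 1]]
    unfolding falling_fact_small by (simp add: algebra_simps power2_eq_square)
  show "(\<lambda>k. poisson_weight l k * real k ^ 3) sums (l ^ 3 + 3 * l ^ 2 + l)"
    using sums_add[OF sums_add[OF F[of 3] sums_mult[OF F[of 2], of 3]] F[of 1]]
    unfolding falling_fact_small by (simp add: algebra_simps power3_eq_cube power2_eq_square)
  show "(\<lambda>k. poisson_weight l k * real k ^ 4) sums (l ^ 4 + 6 * l ^ 3 + 7 * l ^ 2 + l)"
    using sums_add[OF sums_add[OF sums_add[OF F[of 4] sums_mult[OF F[of 3], of 6]]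
        sums_mult[OF F[of 2], of 7]] F[of 1]]
    unfolding falling_fact_small
    by (simp add: algebra_simps power3_eq_cube power2_eq_square power4_eq_xxxx)
qed

lemma poisson_fourth_moment:
  "(\<lambda>k. poisson_weight l k * (q * real k - (q * l + e)) ^ 4)
     sums (q ^ 4 * (l + 3 * l ^ 2) - 4 * q ^ 3 * e * l + 6 * q ^ 2 * e ^ 2 * l + e ^ 4)"
proof -
  define w where "w = - (q * l + e)"
  have expand: "poisson_weight l k * (q * real k - (q * l + e)) ^ 4
      = q ^ 4 * (poisson_weight l k * real k ^ 4)
      + 4 * q ^ 3 * w * (poisson_weight l k * real k ^ 3)
      + 6 * q ^ 2 * w ^ 2 * (poisson_weight l k * real k ^ 2)
      + 4 * q * w ^ 3 * (poisson_weight l k * real k)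
      + w ^ 4 * poisson_weight l k" for k
    unfolding w_def by algebra
  have "(\<lambda>k. poisson_weight l k * (q * real k - (q * l + e)) ^ 4)
     sums (q ^ 4 * (l ^ 4 + 6 * l ^ 3 + 7 * l ^ 2 + l) + 4 * q ^ 3 * w * (l ^ 3 + 3 * l ^ 2 + l)
      + 6 * q ^ 2 * w ^ 2 * (l ^ 2 + l) + 4 * q * w ^ 3 * l + w ^ 4 * 1)"
    unfolding expand by (intro sums_add sums_mult poisson_power_moments poisson_weight_sums_1)
  moreover have "q ^ 4 * (l ^ 4 + 6 * l ^ 3 + 7 * l ^ 2 + l) + 4 * q ^ 3 * w * (l ^ 3 + 3 * l ^ 2 + l)
      + 6 * q ^ 2 * w ^ 2 * (l ^ 2 + l) + 4 * q * w ^ 3 * l + w ^ 4 * 1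
    = q ^ 4 * (l + 3 * l ^ 2) - 4 * q ^ 3 * e * l + 6 * q ^ 2 * e ^ 2 * l + e ^ 4"
    unfolding w_def by algebra
  ultimately show ?thesis by simp
qed

lemma exp_minus_one_bounds:
  fixes h :: real
  assumes "0 \<le> h"
  shows "h \<le> exp h - 1" and "exp h - 1 - h \<le> h * (exp h - 1)"
proof -
  show "h \<le> exp h - 1" using exp_ge_add_one_self[of h] by linarith
  have "exp h * (1 - h) \<le> exp h * exp (- h)"
    using exp_ge_add_one_self[of "- h"] by (intro mult_left_mono) auto
  then show "exp h - 1 - h \<le> h * (exp h - 1)" by (simp add: exp_minus algebra_simps)
qed

definition poisson_rate :: "real \<Rightarrow> nat \<Rightarrow> real \<Rightarrow> real" where
  "poisson_rate a m x = x * ln a / (a powr (1 / real m) - 1)"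

lemma poisson_rate_bounds:
  assumes "a > 1" and "m \<ge> 1" and "0 \<le> x"
  shows "0 \<le> poisson_rate a m x" and "poisson_rate a m x / real m \<le> x"
    and "x - poisson_rate a m x / real m \<le> x * ln a / real m"
proof -
  define h where "h = ln a / real m"
  have h: "h > 0" using assms by (simp add: h_def)
  have u: "a powr (1 / real m) - 1 = exp h - 1"
    using assms by (simp add: powr_def h_def)
  have rate: "poisson_rate a m x / real m = x * h / (exp h - 1)"
    using assms by (simp add: poisson_rate_def u h_def)
  note bounds = exp_minus_one_bounds[OF less_imp_le[OF h]]
  have u_pos: "exp h - 1 > 0" using bounds(1) h by linarith
  show "0 \<le> poisson_rate a m x"
    using assms u u_pos by (simp add: poisson_rate_def)
  show "poisson_rate a m x / real m \<le> x"
    unfolding rate using bounds(1) u_pos assms(3) by (simp add: divide_le_eq mult_left_mono)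
  have "x - x * h / (exp h - 1) = x * (exp h - 1 - h) / (exp h - 1)"
    using u_pos by (simp add: field_simps)
  also have "\<dots> \<le> x * (h * (exp h - 1)) / (exp h - 1)"
    using bounds(2) u_pos assms(3) by (intro divide_right_mono mult_left_mono) auto
  also have "\<dots> = x * ln a / real m"
    using u_pos by (simp add: h_def)
  finally show "x - poisson_rate a m x / real m \<le> x * ln a / real m"
    unfolding rate .
qed

lemma fourth_moment_polynomial_le:
  fixes q l e c B :: real
  assumes "0 < q" "q \<le> 1" "0 \<le> l" "l * q \<le> c" "0 \<le> e" "e \<le> B * q"
  shows "q ^ 4 * (l + 3 * l ^ 2) - 4 * q ^ 3 * e * l + 6 * q ^ 2 * e ^ 2 * l + e ^ 4
    \<le> q ^ 2 * (c + 3 * c ^ 2 + 6 * B ^ 2 * c + B ^ 4)"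
proof -
  define \<nu> where "\<nu> = l * q"
  have \<nu>: "0 \<le> \<nu>" "\<nu> \<le> c" using assms by (simp_all add: \<nu>_def)
  have B: "0 \<le> B" using assms by (meson order.trans zero_le_mult_iff not_le)
  have q2: "q ^ 2 \<le> 1" "q ^ 3 \<le> q ^ 2" "q ^ 4 \<le> q ^ 2"
    using assms by (simp_all add: power_le_one power_decreasing)
  have e2: "e ^ 2 \<le> B ^ 2 * q ^ 2" and e4: "e ^ 4 \<le> B ^ 4 * q ^ 4"
    using power_mono[OF assms(6) assms(5)] by (simp_all add: power_mult_distrib)
  have "q ^ 4 * l = q ^ 2 * (q * \<nu>)" by (simp add: \<nu>_def power_numeral_reduce)
  also have "\<dots> \<le> q ^ 2 * c"
    using \<nu> assms mult_left_le_one_le[of \<nu> q] by (intro mult_left_mono) auto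
  finally have t1: "q ^ 4 * l \<le> q ^ 2 * c" .
  have "q ^ 4 * l ^ 2 = q ^ 2 * \<nu> ^ 2" by (simp add: \<nu>_def power_mult_distrib power_numeral_reduce)
  also have "\<dots> \<le> q ^ 2 * c ^ 2" using \<nu> by (intro mult_left_mono power_mono) auto
  finally have t2: "q ^ 4 * l ^ 2 \<le> q ^ 2 * c ^ 2" .
  have t3: "0 \<le> q ^ 3 * e * l" using assms by simp
  have "q ^ 2 * e ^ 2 * l = q * e ^ 2 * \<nu>" by (simp add: \<nu>_def power2_eq_square)
  also have "\<dots> \<le> q * (B ^ 2 * q ^ 2) * c" using e2 \<nu> assms by (intro mult_mono) auto
  also have "\<dots> = q ^ 3 * B ^ 2 * c" by (simp add: power_numeral_reduce)
  also have "\<dots> \<le> q ^ 2 * B ^ 2 * c" using q2 \<nu> by (intro mult_right_mono) auto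
  finally have t4: "q ^ 2 * e ^ 2 * l \<le> q ^ 2 * B ^ 2 * c" .
  have "B ^ 4 * q ^ 4 \<le> B ^ 4 * q ^ 2" using q2 B by (intro mult_left_mono) auto
  then have t5: "e ^ 4 \<le> q ^ 2 * B ^ 4" using e4 by (simp add: mult.commute)
  have "q ^ 4 * (l + 3 * l ^ 2) - 4 * q ^ 3 * e * l + 6 * q ^ 2 * e ^ 2 * l + e ^ 4
    = q ^ 4 * l + 3 * (q ^ 4 * l ^ 2) - 4 * (q ^ 3 * e * l) + 6 * (q ^ 2 * e ^ 2 * l) + e ^ 4"
    by (simp add: algebra_simps)
  also have "\<dots> \<le> q ^ 2 * c + 3 * (q ^ 2 * c ^ 2) + 6 * (q ^ 2 * B ^ 2 * c) + q ^ 2 * B ^ 4"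
    using t1 t2 t3 t4 t5 by linarith
  also have "\<dots> = q ^ 2 * (c + 3 * c ^ 2 + 6 * B ^ 2 * c + B ^ 4)" by (simp add: algebra_simps)
  finally show ?thesis .
qed

lemma poisson_rate_fourth_moment:
  assumes "a > 1" and "m \<ge> 1" and "0 \<le> x" and "x \<le> c"
  shows "summable (\<lambda>k. poisson_weight (poisson_rate a m x) k * (real k / real m - x) ^ 4)"
    and "(\<Sum>k. poisson_weight (poisson_rate a m x) k * (real k / real m - x) ^ 4)
      \<le> (c + 3 * c ^ 2 + 6 * (c * ln a) ^ 2 * c + (c * ln a) ^ 4) / real m ^ 2"
proof -
  define l where "l = poisson_rate a m x"
  define q where "q = 1 / real m"
  define e where "e = x - l * q"
  have q: "0 < q" "q \<le> 1" using assms by (simp_all add: q_def)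
  note rate = poisson_rate_bounds[OF assms(1-3), folded l_def]
  have point: "q * real k - (q * l + e) = real k / real m - x" for k
    by (simp add: e_def q_def)
  have moment: "(\<lambda>k. poisson_weight l k * (real k / real m - x) ^ 4)
      sums (q ^ 4 * (l + 3 * l ^ 2) - 4 * q ^ 3 * e * l + 6 * q ^ 2 * e ^ 2 * l + e ^ 4)"
    using poisson_fourth_moment[of l q e] unfolding point .
  then show "summable (\<lambda>k. poisson_weight (poisson_rate a m x) k * (real k / real m - x) ^ 4)"
    by (auto simp: l_def sums_iff)
  have "x * ln a / real m \<le> c * ln a / real m"
    using assms by (intro divide_right_mono mult_right_mono) auto
  then have "e \<le> c * ln a * q"
    using rate(3) by (simp add: e_def q_def)
  then have "q ^ 4 * (l + 3 * l ^ 2) - 4 * q ^ 3 * e * l + 6 * q ^ 2 * e ^ 2 * l + e ^ 4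
      \<le> q ^ 2 * (c + 3 * c ^ 2 + 6 * (c * ln a) ^ 2 * c + (c * ln a) ^ 4)"
    using rate assms q by (intro fourth_moment_polynomial_le) (auto simp: e_def q_def)
  then show "(\<Sum>k. poisson_weight (poisson_rate a m x) k * (real k / real m - x) ^ 4)
      \<le> (c + 3 * c ^ 2 + 6 * (c * ln a) ^ 2 * c + (c * ln a) ^ 4) / real m ^ 2"
    using sums_unique[OF moment] by (simp add: l_def q_def power_divide)
qed

lemma s_basis_eq_poisson_weights:
  assumes "a > 1" and "m \<ge> 1" and "n \<ge> 1"
  shows "s_basis a m n k1 k2 x y
    = poisson_weight (poisson_rate a m x) k1 * poisson_weight (poisson_rate a n y) k2"
proof -
  have "a powr (1 / real m) > 1" "a powr (1 / real n) > 1" using assms by auto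
  then show ?thesis
    using assms unfolding s_basis_def poisson_weight_def poisson_rate_def
    by (simp add: powr_def power_divide power_mult_distrib power_add exp_minus field_simps)
qed

lemma Yhat_fst:
  assumes "a > 1" and "m \<ge> 1" and "n \<ge> 1"
  shows "Yhat m n a (\<lambda>t s. f t) x y
    = (\<Sum>k. poisson_weight (poisson_rate a m x) k * f (real k / real m))"
proof -
  have inner: "(\<lambda>k2. s_basis a m n k1 k2 x y * f (real k1 / real m))
      sums (poisson_weight (poisson_rate a m x) k1 * f (real k1 / real m))" for k1
    using sums_mult[OF poisson_weight_sums_1[of "poisson_rate a n y"],
        of "poisson_weight (poisson_rate a m x) k1 * f (real k1 / real m)"]
    by (simp add: s_basis_eq_poisson_weights[OF assms] ac_simps)
  show ?thesis unfolding Yhat_def by (intro suminf_cong) (rule sums_unique[OF inner, symmetric])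
qed

lemma Yhat_snd:
  assumes "a > 1" and "m \<ge> 1" and "n \<ge> 1"
    and "summable (\<lambda>k. poisson_weight (poisson_rate a n y) k * g (real k / real n))"
  shows "Yhat m n a (\<lambda>t s. g s) x y
    = (\<Sum>k. poisson_weight (poisson_rate a n y) k * g (real k / real n))"
    (is "_ = ?G")
proof -
  have inner: "(\<lambda>k2. s_basis a m n k1 k2 x y * g (real k2 / real n))
      sums (poisson_weight (poisson_rate a m x) k1 * ?G)" for k1
    using sums_mult[OF summable_sums[OF assms(4)], of "poisson_weight (poisson_rate a m x) k1"]
    by (simp add: s_basis_eq_poisson_weights[OF assms(1-3)] ac_simps)
  have "Yhat m n a (\<lambda>t s. g s) x y = (\<Sum>k1. poisson_weight (poisson_rate a m x) k1 * ?G)"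
    unfolding Yhat_def by (intro suminf_cong) (rule sums_unique[OF inner, symmetric])
  also have "\<dots> = ?G"
    using sums_unique[OF sums_mult2[OF poisson_weight_sums_1[of "poisson_rate a m x"], of ?G]]
    by simp
  finally show ?thesis .
qed

theorem lemma5:
  fixes a c d :: real
  assumes "a > 1" and "c > 0" and "d > 0"
  shows "\<exists>Mx My. Mx > 0 \<and> My > 0 \<and>
    (\<forall>x y m n. 0 \<le> x \<and> x \<le> c \<and> 0 \<le> y \<and> y \<le> d \<and> m \<ge> 1 \<and> n \<ge> 1 \<longrightarrow>
       Yhat m n a (\<lambda>t s. (t - x) ^ 4) x y \<le> Mx / (real m) ^ 2 \<and>
       Yhat m n a (\<lambda>t s. (s - y) ^ 4) x y \<le> My / (real n) ^ 2)"
proof (intro exI conjI allI impI)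
  show "c + 3 * c ^ 2 + 6 * (c * ln a) ^ 2 * c + (c * ln a) ^ 4 > 0"
    and "d + 3 * d ^ 2 + 6 * (d * ln a) ^ 2 * d + (d * ln a) ^ 4 > 0"
    using assms by (simp_all add: add_pos_nonneg)
  fix x y :: real and m n :: nat
  assume H: "0 \<le> x \<and> x \<le> c \<and> 0 \<le> y \<and> y \<le> d \<and> m \<ge> 1 \<and> n \<ge> 1"
  show "Yhat m n a (\<lambda>t s. (t - x) ^ 4) x y
      \<le> (c + 3 * c ^ 2 + 6 * (c * ln a) ^ 2 * c + (c * ln a) ^ 4) / real m ^ 2"
    using Yhat_fst[of a m n "\<lambda>t. (t - x) ^ 4"] poisson_rate_fourth_moment[of a m x c] assms H
    by simp
  show "Yhat m n a (\<lambda>t s. (s - y) ^ 4) x y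
      \<le> (d + 3 * d ^ 2 + 6 * (d * ln a) ^ 2 * d + (d * ln a) ^ 4) / real n ^ 2"
    using Yhat_snd[of a m n y "\<lambda>s. (s - y) ^ 4"] poisson_rate_fourth_moment[of a n y d] assms H
    by simp
qed

end
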